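(* For all types $A$ and $B$, if $A \equiv B$, then $A \simeq B$.
   Context: Types and rows share one grammar: $A,B,C,\rho ::= X \mid \alpha \mid \star \mid \iota \mid A\to B \mid \forall X{:}K.\,A \mid [\rho] \mid \langle\rho\rangle \mid \cdot \mid \ell{:}A;\rho$, where $X$ ranges over type variables (bound by $\forall$), $\alpha$ over type names, $\star$ is the dynamic type (also serving as the dynamic row), $\iota$ over base types, $[\rho]$ and $\langle\rho\rangle$ are record and variant types, $\cdot$ is the empty row, $\ell$ ranges over labels, and $K\in\{\mathsf T,\mathsf R\}$ is a kind. Types are identified up to renaming of bound variables; $\mathit{ftv}(A)$ is the set of free type variables. Row matching $\rho \triangleright_\ell A,\rho'$ is defined by: $(\ell{:}A;\rho)\triangleright_\ell A,\rho$; if $\ell'\neq\ell$ and $\rho\triangleright_\ell A,\rho'$ then $(\ell'{:}B;\rho)\triangleright_\ell A,(\ell'{:}B;\rho')$; and $\star\triangleright_\ell \star,\star$. $\mathbf{QPoly}(A)$ holds iff $A$ is not of the form $\forall X{:}K.\,B$ and $\star$ occurs in $A$. Type equivalence $\equiv$ is the least equivalence relation that is a congruence for $\to$, $\forall X{:}K.\,-$, $[-]$, $\langle-\rangle$ and $\ell{:}-;-$, and contains $\ell{:}A;\ell'{:}B;\rho \equiv \ell'{:}B;\ell{:}A;\rho$ whenever $\ell\neq\ell'$. Consistency $\simeq$ is defined inductively: $A\simeq A$; $\star\simeq A$; $A\simeq\star$; $A_1\to A_2\simeq B_1\to B_2$ if $A_1\simeq B_1$ and $A_2\simeq B_2$;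 $\forall X{:}K.A\simeq\forall X{:}K.B$ if $A\simeq B$; $\forall X{:}K.A\simeq B$ if $\mathbf{QPoly}(B)$, $X\notin\mathit{ftv}(B)$ and $A\simeq B$; $A\simeq\forall X{:}K.B$ if $\mathbf{QPoly}(A)$, $X\notin\mathit{ftv}(A)$ and $A\simeq B$; $[\rho_1]\simeq[\rho_2]$ and $\langle\rho_1\rangle\simeq\langle\rho_2\rangle$ if $\rho_1\simeq\rho_2$; $\ell{:}A;\rho_1\simeq B$ if $B\triangleright_\ell B',\rho_2$, $A\simeq B'$ and $\rho_1\simeq\rho_2$; $A\simeq \ell{:}B;\rho_2$ if $A\triangleright_\ell A',\rho_1$, $A'\simeq B$ and $\rho_1\simeq\rho_2$. *)

theory Defs
  imports Main
begin

datatype kind = KT | KR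

(* Types and rows share one grammar. Bound type variables X use de Bruijn indices
   (so types are identified up to renaming of bound variables by construction). *)
datatype ty =
    TVar nat
  | TName nat
  | Dyn                 (* star: dynamic type / dynamic row *)
  | Base nat
  | Fun ty ty
  | All kind ty
  | Rcd ty
  | Vnt ty
  | Empty
  | Ext nat ty ty

fun lift :: "nat \<Rightarrow> ty \<Rightarrow> ty" where
  "lift k (TVar i) = (if i < k then TVar i else TVar (Suc i))"
| "lift k (TName a) = TName a"
| "lift k Dyn = Dyn"
| "lift k (Base b) = Base b"
| "lift k (Fun A B) = Fun (lift k A) (lift k B)"
| "lift k (All K A) = All K (lift (Suc k) A)"
| "lift k (Rcd r) = Rcd (lift k r)"
| "lift k (Vnt r) = Vnt (lift k r)"
| "lift k Empty = Empty"
| "lift k (Ext l A r) = Ext l (lift k A) (lift k r)"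

fun has_dyn :: "ty \<Rightarrow> bool" where
  "has_dyn (TVar i) = False"
| "has_dyn (TName a) = False"
| "has_dyn Dyn = True"
| "has_dyn (Base b) = False"
| "has_dyn (Fun A B) = (has_dyn A \<or> has_dyn B)"
| "has_dyn (All K A) = has_dyn A"
| "has_dyn (Rcd r) = has_dyn r"
| "has_dyn (Vnt r) = has_dyn r"
| "has_dyn Empty = False"
| "has_dyn (Ext l A r) = (has_dyn A \<or> has_dyn r)"

definition QPoly :: "ty \<Rightarrow> bool" where
  "QPoly A \<longleftrightarrow> (\<forall>K B. A \<noteq> All K B) \<and> has_dyn A"

inductive row_match :: "ty \<Rightarrow> nat \<Rightarrow> ty \<Rightarrow> ty \<Rightarrow> bool" where
  rm_head: "row_match (Ext l A r) l A r"
| rm_skip: "l' \<noteq> l \<Longrightarrow> row_match r l A r' \<Longrightarrow> row_match (Ext l' B r) l A (Ext l' B r')"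
| rm_dyn: "row_match Dyn l Dyn Dyn"

inductive ty_equiv :: "ty \<Rightarrow> ty \<Rightarrow> bool" (infix "\<equiv>\<^sub>t" 50) where
  eq_refl: "A \<equiv>\<^sub>t A"
| eq_sym: "A \<equiv>\<^sub>t B \<Longrightarrow> B \<equiv>\<^sub>t A"
| eq_trans: "A \<equiv>\<^sub>t B \<Longrightarrow> B \<equiv>\<^sub>t C \<Longrightarrow> A \<equiv>\<^sub>t C"
| eq_fun: "A1 \<equiv>\<^sub>t B1 \<Longrightarrow> A2 \<equiv>\<^sub>t B2 \<Longrightarrow> Fun A1 A2 \<equiv>\<^sub>t Fun B1 B2"
| eq_all: "A \<equiv>\<^sub>t B \<Longrightarrow> All K A \<equiv>\<^sub>t All K B"
| eq_rcd: "A \<equiv>\<^sub>t B \<Longrightarrow> Rcd A \<equiv>\<^sub>t Rcd B"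
| eq_vnt: "A \<equiv>\<^sub>t B \<Longrightarrow> Vnt A \<equiv>\<^sub>t Vnt B"
| eq_ext: "A \<equiv>\<^sub>t B \<Longrightarrow> r1 \<equiv>\<^sub>t r2 \<Longrightarrow> Ext l A r1 \<equiv>\<^sub>t Ext l B r2"
| eq_swap: "l \<noteq> l' \<Longrightarrow> Ext l A (Ext l' B r) \<equiv>\<^sub>t Ext l' B (Ext l A r)"

(* consistency; the side condition X \<notin> ftv(B) together with A \<simeq> B is rendered
   in de Bruijn form by comparing the body A with B lifted past the new binder *)
inductive consistent :: "ty \<Rightarrow> ty \<Rightarrow> bool" (infix "\<simeq>" 50) where
  c_refl: "A \<simeq> A"
| c_dynL: "Dyn \<simeq> A"
| c_dynR: "A \<simeq> Dyn"
| c_fun: "A1 \<simeq> B1 \<Longrightarrow> A2 \<simeq> B2 \<Longrightarrow> Fun A1 A2 \<simeq> Fun B1 B2"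
| c_all: "A \<simeq> B \<Longrightarrow> All K A \<simeq> All K B"
| c_allL: "QPoly B \<Longrightarrow> A \<simeq> lift 0 B \<Longrightarrow> All K A \<simeq> B"
| c_allR: "QPoly A \<Longrightarrow> lift 0 A \<simeq> B \<Longrightarrow> A \<simeq> All K B"
| c_rcd: "r1 \<simeq> r2 \<Longrightarrow> Rcd r1 \<simeq> Rcd r2"
| c_vnt: "r1 \<simeq> r2 \<Longrightarrow> Vnt r1 \<simeq> Vnt r2"
| c_extL: "row_match B l B' r2 \<Longrightarrow> A \<simeq> B' \<Longrightarrow> r1 \<simeq> r2 \<Longrightarrow> Ext l A r1 \<simeq> B"
| c_extR: "row_match A l A' r1 \<Longrightarrow> A' \<simeq> B \<Longrightarrow> r1 \<simeq> r2 \<Longrightarrow> A \<simeq> Ext l B r2"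

end

theory Submission
  imports Defs
begin

(* Equivalence only permutes adjacent row fields, so it preserves the head constructor
   of every type, and every field that a row exposes by matching is exposed, up to
   equivalence, by each equivalent row. These two invariants let the proof proceed by
   structural induction on A: in the row case, matching the head field of A on the
   equivalent side yields exactly the premises of rule c_extL. *)

inductive_simps row_match_Fun [simp]: "row_match (Fun A B) l C r"
inductive_simps row_match_All [simp]: "row_match (All K A) l C r"
inductive_simps row_match_Rcd [simp]: "row_match (Rcd A) l C r"
inductive_simps row_match_Vnt [simp]: "row_match (Vnt A) l C r"

lemma row_match_ExtE:
  assumes "row_match (Ext l' A r) l C r'"
  obtains (head) "l = l'" "C = A" "r' = r"
    | (skip) r0 where "l' \<noteq> l" "row_match r l C r0" "r' = Ext l' A r0"
  using assms by (cases rule: row_match.cases) auto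

(* For rows only the constructor is recorded: a swap changes the head label and field. *)
fun head_equiv :: "ty \<Rightarrow> ty \<Rightarrow> bool" where
  "head_equiv (Fun A1 A2) B = (\<exists>B1 B2. B = Fun B1 B2 \<and> A1 \<equiv>\<^sub>t B1 \<and> A2 \<equiv>\<^sub>t B2)"
| "head_equiv (All K A) B = (\<exists>B'. B = All K B' \<and> A \<equiv>\<^sub>t B')"
| "head_equiv (Rcd r) B = (\<exists>r'. B = Rcd r' \<and> r \<equiv>\<^sub>t r')"
| "head_equiv (Vnt r) B = (\<exists>r'. B = Vnt r' \<and> r \<equiv>\<^sub>t r')"
| "head_equiv (Ext l A r) B = (\<exists>l' B' r'. B = Ext l' B' r')"
| "head_equiv A B = (B = A)"

lemma head_equiv_refl: "head_equiv A A"
  by (cases A) (auto intro: eq_refl)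

lemma head_equiv_sym: "head_equiv A B \<Longrightarrow> head_equiv B A"
  by (cases A) (auto intro: eq_sym)

lemma head_equiv_trans: "head_equiv A B \<Longrightarrow> head_equiv B C \<Longrightarrow> head_equiv A C"
  by (cases A; auto; meson eq_trans)

lemma ty_equiv_imp_head_equiv: "A \<equiv>\<^sub>t B \<Longrightarrow> head_equiv A B"
  by (induction rule: ty_equiv.induct)
    (auto intro: head_equiv_refl head_equiv_sym head_equiv_trans)

definition row_match_sim :: "ty \<Rightarrow> ty \<Rightarrow> bool" where
  "row_match_sim A B \<longleftrightarrow> (\<forall>l C r. row_match A l C r \<longrightarrow>
      (\<exists>D r'. row_match B l D r' \<and> C \<equiv>\<^sub>t D \<and> r \<equiv>\<^sub>t r'))"

lemma row_match_sim_refl: "row_match_sim A A"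
  unfolding row_match_sim_def by (auto intro: eq_refl)

lemma row_match_sim_trans: "row_match_sim A B \<Longrightarrow> row_match_sim B C \<Longrightarrow> row_match_sim A C"
  unfolding row_match_sim_def by (meson eq_trans)

lemma row_match_sim_Ext:
  assumes "A \<equiv>\<^sub>t B" "r1 \<equiv>\<^sub>t r2" "row_match_sim r1 r2"
  shows "row_match_sim (Ext l' A r1) (Ext l' B r2)"
  unfolding row_match_sim_def
proof (intro allI impI)
  fix l C r
  assume "row_match (Ext l' A r1) l C r"
  then show "\<exists>D r'. row_match (Ext l' B r2) l D r' \<and> C \<equiv>\<^sub>t D \<and> r \<equiv>\<^sub>t r'"
  proof (cases rule: row_match_ExtE)
    case head
    then show ?thesis using assms(1,2) by (auto intro: row_match.rm_head)
  next
    case (skip r0)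
    then obtain D r' where "row_match r2 l D r'" "C \<equiv>\<^sub>t D" "r0 \<equiv>\<^sub>t r'"
      using assms(3) unfolding row_match_sim_def by blast
    then show ?thesis using skip assms(1) by (auto intro!: row_match.rm_skip eq_ext)
  qed
qed

lemma row_match_sim_swap:
  assumes "l1 \<noteq> l2"
  shows "row_match_sim (Ext l1 A1 (Ext l2 A2 r)) (Ext l2 A2 (Ext l1 A1 r))"
  unfolding row_match_sim_def
proof (intro allI impI)
  fix l C r'
  assume "row_match (Ext l1 A1 (Ext l2 A2 r)) l C r'"
  then show "\<exists>D r''. row_match (Ext l2 A2 (Ext l1 A1 r)) l D r'' \<and> C \<equiv>\<^sub>t D \<and> r' \<equiv>\<^sub>t r''"
  proof (cases rule: row_match_ExtE)
    case head
    then show ?thesis using assms by (auto intro!: row_match.intros eq_refl)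
  next
    case (skip r0)
    from skip(2) show ?thesis
    proof (cases rule: row_match_ExtE)
      case head
      then show ?thesis using skip by (auto intro!: row_match.intros eq_refl)
    next
      case (skip r00)
      then show ?thesis using \<open>l1 \<noteq> l\<close> \<open>r' = Ext l1 A1 r0\<close> assms
        by (auto intro!: row_match.intros eq_refl eq_swap)
    qed
  qed
qed

lemma ty_equiv_imp_row_match_sim: "A \<equiv>\<^sub>t B \<Longrightarrow> row_match_sim A B \<and> row_match_sim B A"
proof (induction rule: ty_equiv.induct)
  case (eq_trans A B C)
  then show ?case using row_match_sim_trans by blast
next
  case (eq_ext A B r1 r2 l)
  then show ?case using row_match_sim_Ext eq_sym by blast
next
  case (eq_swap l l' A B r)
  then show ?case using row_match_sim_swap by auto
qed (auto simp: row_match_sim_def intro: eq_refl)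

lemma row_match_ty_equiv:
  assumes "A \<equiv>\<^sub>t B" "row_match A l C r"
  obtains D r' where "row_match B l D r'" "C \<equiv>\<^sub>t D" "r \<equiv>\<^sub>t r'"
  using ty_equiv_imp_row_match_sim[OF assms(1)] assms(2) unfolding row_match_sim_def by blast

theorem mainTheorem5:
  fixes A B :: ty
  assumes "A \<equiv>\<^sub>t B"
  shows "A \<simeq> B"
  using assms
proof (induction A arbitrary: B)
  case (Ext l A r)
  obtain D r' where "row_match B l D r'" "A \<equiv>\<^sub>t D" "r \<equiv>\<^sub>t r'"
    using row_match_ty_equiv[OF Ext.prems rm_head] .
  then show ?case using Ext.IH by (blast intro: c_extL)
next
  case (Fun A1 A2)
  then show ?case using ty_equiv_imp_head_equiv[OF Fun.prems] by (auto intro: c_fun)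
next
  case (All K A)
  then show ?case using ty_equiv_imp_head_equiv[OF All.prems] by (auto intro: c_all)
next
  case (Rcd r)
  then show ?case using ty_equiv_imp_head_equiv[OF Rcd.prems] by (auto intro: c_rcd)
next
  case (Vnt r)
  then show ?case using ty_equiv_imp_head_equiv[OF Vnt.prems] by (auto intro: c_vnt)
qed (use ty_equiv_imp_head_equiv c_refl in fastforce)+

end
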